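(* If $\delta:\mathrm{Pol}(S^1)\oplus\mathrm{Pol}(S^1)\to C(S^1)\oplus C(S^1)$ is any derivation, then there exist functions $f,g\in C(S^1)$ such that $$\delta=\delta_{f,g}:=\Big(f(x)\frac{1}{i}\frac{d}{dx},\ g(x)\frac{1}{i}\frac{d}{dx}\Big).$$
   Context: $\mathrm{Pol}(S^1)$ is the algebra of trigonometric polynomials in $x$ (polynomials in $e^{ix},e^{-ix}$), regarded as a subalgebra of $C(S^1)$; $\mathrm{Pol}(S^1)\oplus\mathrm{Pol}(S^1)$ is a subalgebra of $C(S^1)\oplus C(S^1)$ with componentwise operations, and a derivation is a linear map into $C(S^1)\oplus C(S^1)$ satisfying the Leibniz rule with respect to this inclusion. *)

theory Defs
  imports "HOL-Analysis.Analysis"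
begin

text \<open>The circle S^1 is parametrised by the angle x (a real number, 2pi-periodic).
  Functions on S^1 are represented as 2pi-periodic functions real => complex.\<close>

definition trig_pol :: "(real \<Rightarrow> complex) set" where
  "trig_pol = {p. \<exists>(N::int) (c::int \<Rightarrow> complex).
      \<forall>x. p x = (\<Sum>k\<in>{-N..N}. c k * exp (\<i> * of_int k * of_real x))}"

definition cont_S1 :: "(real \<Rightarrow> complex) set" where
  "cont_S1 = {f. continuous_on UNIV f \<and> (\<forall>x. f (x + 2 * pi) = f x)}"

definition padd :: "(real \<Rightarrow> complex) \<times> (real \<Rightarrow> complex) \<Rightarrow> (real \<Rightarrow> complex) \<times> (real \<Rightarrow> complex)
    \<Rightarrow> (real \<Rightarrow> complex) \<times> (real \<Rightarrow> complex)" where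
  "padd a b = ((\<lambda>x. fst a x + fst b x), (\<lambda>x. snd a x + snd b x))"

definition pmul :: "(real \<Rightarrow> complex) \<times> (real \<Rightarrow> complex) \<Rightarrow> (real \<Rightarrow> complex) \<times> (real \<Rightarrow> complex)
    \<Rightarrow> (real \<Rightarrow> complex) \<times> (real \<Rightarrow> complex)" where
  "pmul a b = ((\<lambda>x. fst a x * fst b x), (\<lambda>x. snd a x * snd b x))"

definition pscale :: "complex \<Rightarrow> (real \<Rightarrow> complex) \<times> (real \<Rightarrow> complex) \<Rightarrow> (real \<Rightarrow> complex) \<times> (real \<Rightarrow> complex)" where
  "pscale c a = ((\<lambda>x. c * fst a x), (\<lambda>x. c * snd a x))"

text \<open>Only its values on Pol(S^1) x Pol(S^1) are constrained.\<close>
definition pol_derivation ::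
  "((real \<Rightarrow> complex) \<times> (real \<Rightarrow> complex) \<Rightarrow> (real \<Rightarrow> complex) \<times> (real \<Rightarrow> complex)) \<Rightarrow> bool" where
  "pol_derivation \<delta> \<longleftrightarrow>
     (\<forall>a \<in> trig_pol \<times> trig_pol. \<delta> a \<in> cont_S1 \<times> cont_S1) \<and>
     (\<forall>a \<in> trig_pol \<times> trig_pol. \<forall>b \<in> trig_pol \<times> trig_pol. \<delta> (padd a b) = padd (\<delta> a) (\<delta> b)) \<and>
     (\<forall>c. \<forall>a \<in> trig_pol \<times> trig_pol. \<delta> (pscale c a) = pscale c (\<delta> a)) \<and>
     (\<forall>a \<in> trig_pol \<times> trig_pol. \<forall>b \<in> trig_pol \<times> trig_pol.
        \<delta> (pmul a b) = padd (pmul a (\<delta> b)) (pmul (\<delta> a) b))"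

end

theory Submission
  imports Defs
begin

text \<open>Writing \<open>(p, 0) = (1, 0) (p, 0)\<close>, the Leibniz rule shows that a derivation of the direct
  sum maps each summand into itself (the second summand by the symmetry swapping the two).
  On a summand it is a derivation \<open>D\<close> of \<open>Pol(S\<^sup>1)\<close>. With \<open>e\<^sub>k x = exp (i k x)\<close> and
  \<open>f = e\<^sub>-\<^sub>1 D e\<^sub>1\<close>, the identity \<open>D e\<^sub>k\<^sub>+\<^sub>1 = e\<^sub>k D e\<^sub>1 + e\<^sub>1 D e\<^sub>k\<close> gives \<open>D e\<^sub>k = k f e\<^sub>k\<close> by induction
  over the integers in both directions, and \<open>k e\<^sub>k = (1/i) e\<^sub>k'\<close>; linearity finishes the proof.\<close>

definition circle_char :: "int \<Rightarrow> real \<Rightarrow> complex" where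
  "circle_char k x = exp (\<i> * of_int k * of_real x)"

lemma circle_char_mult: "circle_char k x * circle_char l x = circle_char (k + l) x"
  by (simp add: circle_char_def exp_add[symmetric] algebra_simps)

lemma circle_char_0 [simp]: "circle_char 0 = (\<lambda>x. 1)"
  by (simp add: circle_char_def fun_eq_iff)

lemma circle_char_in_cont_S1: "circle_char k \<in> cont_S1"
proof -
  have "circle_char k (x + 2 * pi) = circle_char k x" for x
  proof -
    have "circle_char k (x + 2 * pi) = circle_char k x * exp ((2 * of_int k * pi) * \<i>)"
      by (simp add: circle_char_def exp_add[symmetric] algebra_simps)
    also have "exp ((2 * of_int k * pi) * \<i>) = 1"
      by (rule exp_integer_2pi) simp
    finally show ?thesis by simp
  qed
  moreover have "continuous_on UNIV (circle_char k)"
    unfolding circle_char_def by (intro continuous_intros)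
  ultimately show ?thesis by (simp add: cont_S1_def)
qed

lemma cont_S1_mult: "f \<in> cont_S1 \<Longrightarrow> g \<in> cont_S1 \<Longrightarrow> (\<lambda>x. f x * g x) \<in> cont_S1"
  by (auto simp: cont_S1_def intro: continuous_on_mult)

lemma trig_pol_iff_expansion:
  "p \<in> trig_pol \<longleftrightarrow> (\<exists>N c. p = (\<lambda>x. \<Sum>k\<in>{-N..N}. c k * circle_char k x))"
  by (simp add: trig_pol_def circle_char_def fun_eq_iff)

lemma trig_pol_sum:
  assumes "finite S"
  shows "(\<lambda>x. \<Sum>k\<in>S. c k * circle_char k x) \<in> trig_pol"
proof -
  define N where "N = (\<Sum>k\<in>S. \<bar>k\<bar>)"
  have "S \<subseteq> {-N..N}"
    using member_le_sum[of _ S abs] assms by (force simp: N_def)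
  then have "(\<Sum>k\<in>S. c k * circle_char k x) =
      (\<Sum>k\<in>{-N..N}. (if k \<in> S then c k else 0) * circle_char k x)" for x
    by (intro sum.mono_neutral_cong_left) auto
  then show ?thesis
    unfolding trig_pol_iff_expansion
    by (intro exI[of _ N] exI[of _ "\<lambda>k. if k \<in> S then c k else 0"]) (simp add: fun_eq_iff)
qed

lemma trig_pol_scaled_char: "(\<lambda>x. c * circle_char k x) \<in> trig_pol"
  using trig_pol_sum[of "{k}" "\<lambda>_. c"] by simp

lemma trig_pol_char: "circle_char k \<in> trig_pol"
  using trig_pol_scaled_char[of 1 k] by simp

lemma trig_pol_const: "(\<lambda>x. c) \<in> trig_pol"
  using trig_pol_scaled_char[of c 0] by simp

lemma vector_derivative_trig_sum:
  assumes "finite S"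
  shows "vector_derivative (\<lambda>x. \<Sum>k\<in>S. c k * circle_char k x) (at x)
       = (\<Sum>k\<in>S. c k * (\<i> * of_int k * circle_char k x))"
proof -
  have "((\<lambda>z. \<Sum>k\<in>S. c k * exp (\<i> * of_int k * z)) has_field_derivative
        (\<Sum>k\<in>S. c k * (\<i> * of_int k * exp (\<i> * of_int k * of_real x)))) (at (of_real x))"
    by (auto intro!: derivative_eq_intros sum.cong)
  from has_vector_derivative_real_field[OF this, of UNIV]
  show ?thesis
    unfolding circle_char_def by (intro vector_derivative_at) simp
qed

locale trig_derivation =
  fixes D :: "(real \<Rightarrow> complex) \<Rightarrow> real \<Rightarrow> complex"
  assumes continuous: "p \<in> trig_pol \<Longrightarrow> D p \<in> cont_S1"
    and add: "p \<in> trig_pol \<Longrightarrow> q \<in> trig_pol \<Longrightarrow> D (\<lambda>x. p x + q x) = (\<lambda>x. D p x + D q x)"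
    and scale: "p \<in> trig_pol \<Longrightarrow> D (\<lambda>x. c * p x) = (\<lambda>x. c * D p x)"
    and leibniz: "p \<in> trig_pol \<Longrightarrow> q \<in> trig_pol \<Longrightarrow>
      D (\<lambda>x. p x * q x) = (\<lambda>x. p x * D q x + D p x * q x)"
begin

lemma const_one: "D (\<lambda>x. 1) = (\<lambda>x. 0)"
  using leibniz[OF trig_pol_const trig_pol_const, of 1 1] by (simp add: fun_eq_iff)

lemma sum:
  assumes "finite S"
  shows "D (\<lambda>x. \<Sum>k\<in>S. c k * circle_char k x) = (\<lambda>x. \<Sum>k\<in>S. c k * D (circle_char k) x)"
  using assms
proof (induction S rule: finite_induct)
  case empty
  then show ?case
    using scale[OF trig_pol_const, of 0 1] by simp
next
  case (insert a S)
  then show ?case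
    using add[OF trig_pol_scaled_char trig_pol_sum[OF insert(1)], of "c a" a c]
      scale[OF trig_pol_char, of "c a" a]
    by simp
qed

lemma circle_char_succ:
  "D (circle_char (k + 1)) x = circle_char k x * D (circle_char 1) x + D (circle_char k) x * circle_char 1 x"
  using leibniz[OF trig_pol_char trig_pol_char, of k 1] by (simp add: circle_char_mult fun_eq_iff)

lemma circle_char_eigen: "\<exists>f\<in>cont_S1. \<forall>k. D (circle_char k) = (\<lambda>x. of_int k * f x * circle_char k x)"
proof (intro bexI allI ext)
  define f where "f x = D (circle_char 1) x * circle_char (-1) x" for x
  show "f \<in> cont_S1"
    unfolding f_def by (intro cont_S1_mult continuous trig_pol_char circle_char_in_cont_S1)
  fix k x
  have inverse: "circle_char 1 x * circle_char (-1) x = 1"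
    by (simp add: circle_char_mult)
  have D1: "D (circle_char 1) x = f x * circle_char 1 x"
    using inverse by (simp add: f_def mult.assoc mult.commute[of "circle_char (-1) x"])
  show "D (circle_char k) x = of_int k * f x * circle_char k x"
  proof (induction k rule: int_induct[where k = 0])
    case base
    then show ?case
      using const_one by simp
  next
    case (step1 k)
    have "D (circle_char (k + 1)) x = of_int (k + 1) * f x * (circle_char k x * circle_char 1 x)"
      unfolding circle_char_succ step1 D1 by (simp add: algebra_simps)
    then show ?case
      by (simp add: circle_char_mult)
  next
    case (step2 k)
    have "D (circle_char (k - 1)) x * circle_char 1 x = of_int (k - 1) * f x * circle_char k x"
      using circle_char_succ[of "k - 1" x] step2 D1 circle_char_mult[of "k - 1" x 1]
      by (simp add: algebra_simps)
    then have "D (circle_char (k - 1)) x * (circle_char 1 x * circle_char (-1) x)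
        = of_int (k - 1) * f x * (circle_char k x * circle_char (-1) x)"
      by (simp add: mult.assoc[symmetric])
    then show ?case
      by (simp add: circle_char_mult inverse)
  qed
qed

lemma eq_multiple_of_derivative:
  "\<exists>f\<in>cont_S1. \<forall>p\<in>trig_pol. D p = (\<lambda>x. f x * ((1 / \<i>) * vector_derivative p (at x)))"
proof -
  obtain f where "f \<in> cont_S1" and f: "\<And>k. D (circle_char k) = (\<lambda>x. of_int k * f x * circle_char k x)"
    using circle_char_eigen by blast
  have "D p = (\<lambda>x. f x * ((1 / \<i>) * vector_derivative p (at x)))" if "p \<in> trig_pol" for p
  proof -
    obtain N c where p: "p = (\<lambda>x. \<Sum>k\<in>{-N..N}. c k * circle_char k x)"
      using \<open>p \<in> trig_pol\<close> unfolding trig_pol_iff_expansion by blast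
    show ?thesis
      unfolding p sum[OF finite_atLeastAtMost_int] vector_derivative_trig_sum[OF finite_atLeastAtMost_int]
      by (simp add: f fun_eq_iff sum_distrib_left algebra_simps)
  qed
  with \<open>f \<in> cont_S1\<close> show ?thesis
    by blast
qed

end

lemma
  assumes "pol_derivation \<delta>" "a \<in> trig_pol \<times> trig_pol"
  shows pol_derivation_cont: "\<delta> a \<in> cont_S1 \<times> cont_S1"
    and pol_derivation_scale: "\<delta> (pscale c a) = pscale c (\<delta> a)"
  using assms unfolding pol_derivation_def by blast+

lemma
  assumes "pol_derivation \<delta>" "a \<in> trig_pol \<times> trig_pol" "b \<in> trig_pol \<times> trig_pol"
  shows pol_derivation_add: "\<delta> (padd a b) = padd (\<delta> a) (\<delta> b)"
    and pol_derivation_mult: "\<delta> (pmul a b) = padd (pmul a (\<delta> b)) (pmul (\<delta> a) b)"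
  using assms unfolding pol_derivation_def by blast+

lemma pol_derivation_swap:
  assumes "pol_derivation \<delta>"
  shows "pol_derivation (prod.swap \<circ> \<delta> \<circ> prod.swap)"
proof -
  have swap_ops: "prod.swap (padd a b) = padd (prod.swap a) (prod.swap b)"
    "prod.swap (pmul a b) = pmul (prod.swap a) (prod.swap b)"
    "prod.swap (pscale c a) = pscale c (prod.swap a)" for a b c
    by (simp_all add: padd_def pmul_def pscale_def)
  have swap_mem: "prod.swap a \<in> A \<times> B \<longleftrightarrow> a \<in> B \<times> A" for a and A B :: "'a set"
    by (cases a) auto
  show ?thesis
    unfolding pol_derivation_def
    by (simp add: swap_ops swap_mem pol_derivation_cont[OF assms] pol_derivation_add[OF assms]
        pol_derivation_scale[OF assms] pol_derivation_mult[OF assms])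
qed

lemma pol_derivation_snd_of_fst:
  assumes "pol_derivation \<delta>" "p \<in> trig_pol"
  shows "snd (\<delta> (p, \<lambda>x. 0)) = (\<lambda>x. 0)"
proof -
  have "(p, \<lambda>x. 0) = pmul (\<lambda>x. 1, \<lambda>x. 0) (p, \<lambda>x. 0)"
    by (simp add: pmul_def)
  then have "\<delta> (p, \<lambda>x. 0) =
      padd (pmul (\<lambda>x. 1, \<lambda>x. 0) (\<delta> (p, \<lambda>x. 0))) (pmul (\<delta> (\<lambda>x. 1, \<lambda>x. 0)) (p, \<lambda>x. 0))"
    using pol_derivation_mult[OF assms(1), of "(\<lambda>x. 1, \<lambda>x. 0)" "(p, \<lambda>x. 0)"]
    by (simp add: assms(2) trig_pol_const)
  from arg_cong[where f = snd, OF this] show ?thesis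
    by (simp add: padd_def pmul_def)
qed

lemma pol_derivation_fst_component:
  assumes "pol_derivation \<delta>"
  shows "trig_derivation (\<lambda>p. fst (\<delta> (p, \<lambda>x. 0)))"
proof
  fix p q :: "real \<Rightarrow> complex" and c
  assume "p \<in> trig_pol"
  then have p: "(p, \<lambda>x. 0) \<in> trig_pol \<times> trig_pol"
    by (simp add: trig_pol_const)
  show "fst (\<delta> (p, \<lambda>x. 0)) \<in> cont_S1"
    using pol_derivation_cont[OF assms p] by (simp add: mem_Times_iff)
  show "fst (\<delta> (\<lambda>x. c * p x, \<lambda>x. 0)) = (\<lambda>x. c * fst (\<delta> (p, \<lambda>x. 0)) x)"
    using pol_derivation_scale[OF assms p, of c] by (simp add: pscale_def)
  assume "q \<in> trig_pol"
  then have q: "(q, \<lambda>x. 0) \<in> trig_pol \<times> trig_pol"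
    by (simp add: trig_pol_const)
  show "fst (\<delta> (\<lambda>x. p x + q x, \<lambda>x. 0)) = (\<lambda>x. fst (\<delta> (p, \<lambda>x. 0)) x + fst (\<delta> (q, \<lambda>x. 0)) x)"
    using pol_derivation_add[OF assms p q] by (simp add: padd_def)
  show "fst (\<delta> (\<lambda>x. p x * q x, \<lambda>x. 0)) =
      (\<lambda>x. p x * fst (\<delta> (q, \<lambda>x. 0)) x + fst (\<delta> (p, \<lambda>x. 0)) x * q x)"
    using pol_derivation_mult[OF assms p q] by (simp add: padd_def pmul_def)
qed

lemma pol_derivation_split:
  assumes "pol_derivation \<delta>" "p \<in> trig_pol" "q \<in> trig_pol"
  shows "\<delta> (p, q) = (fst (\<delta> (p, \<lambda>x. 0)), snd (\<delta> (\<lambda>x. 0, q)))"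
proof -
  have "padd (p, \<lambda>x. 0) (\<lambda>x. 0, q) = (p, q)"
    by (simp add: padd_def)
  then have "\<delta> (p, q) = padd (\<delta> (p, \<lambda>x. 0)) (\<delta> (\<lambda>x. 0, q))"
    using pol_derivation_add[OF assms(1), of "(p, \<lambda>x. 0)" "(\<lambda>x. 0, q)"]
    by (simp add: assms(2,3) trig_pol_const)
  moreover have "fst (\<delta> (\<lambda>x. 0, q)) = (\<lambda>x. 0)"
    using pol_derivation_snd_of_fst[OF pol_derivation_swap[OF assms(1)] assms(3)] by simp
  ultimately show ?thesis
    using pol_derivation_snd_of_fst[OF assms(1,2)] by (simp add: padd_def)
qed

theorem mainTheorem13:
  assumes "pol_derivation \<delta>"
  shows "\<exists>f \<in> cont_S1. \<exists>g \<in> cont_S1. \<forall>p \<in> trig_pol. \<forall>q \<in> trig_pol.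
           \<delta> (p, q) = ((\<lambda>x. f x * ((1 / \<i>) * vector_derivative p (at x))),
                        (\<lambda>x. g x * ((1 / \<i>) * vector_derivative q (at x))))"
proof -
  obtain f where "f \<in> cont_S1"
    and f: "\<And>p. p \<in> trig_pol \<Longrightarrow> fst (\<delta> (p, \<lambda>x. 0)) = (\<lambda>x. f x * ((1 / \<i>) * vector_derivative p (at x)))"
    using trig_derivation.eq_multiple_of_derivative[OF pol_derivation_fst_component[OF assms]]
    by blast
  obtain g where "g \<in> cont_S1"
    and g: "\<And>q. q \<in> trig_pol \<Longrightarrow> snd (\<delta> (\<lambda>x. 0, q)) = (\<lambda>x. g x * ((1 / \<i>) * vector_derivative q (at x)))"
    using trig_derivation.eq_multiple_of_derivative
      [OF pol_derivation_fst_component[OF pol_derivation_swap[OF assms]]]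
    by auto
  show ?thesis
    using \<open>f \<in> cont_S1\<close> \<open>g \<in> cont_S1\<close> by (auto simp: pol_derivation_split[OF assms] f g)
qed

end
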